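(* Let $p$ and $q$ be odd primes and let $h \geq 1$ be an odd integer. Suppose $r, s$ are rational numbers with $2r, 2s \in \mathbb{Z}$, $2r \not\equiv 0 \pmod q$, $2s \not\equiv 0 \pmod q$, and $r^2 - p s^2 = q^h$. Define the rational number $S$ by $(r + s\sqrt{p})^h - (r - s\sqrt{p})^h = 2 S \sqrt{p}$. Then $\left(\frac{S}{q}\right) = \left(\frac{s}{q}\right)$.
   Context: $\left(\frac{\cdot}{q}\right)$ is the Legendre symbol modulo $q$; for a rational number whose denominator is a power of $2$ (such as $s$ and $S$), it is evaluated on its reduction modulo $q$ (using that $2$ is invertible modulo $q$). *)

theory Defs
  imports "HOL-Analysis.Analysis" "HOL-Number_Theory.Number_Theory"
begin

text \<open>Reduction modulo q of a rational number whose denominator is invertible mod q: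
  the unique residue c in [0,q) with d * c = a (mod q), where x = a/d in lowest terms.\<close>
definition rat_mod :: "rat \<Rightarrow> int \<Rightarrow> int" where
  "rat_mod x q = (let (a, d) = quotient_of x in
      (THE c. 0 \<le> c \<and> c < q \<and> [d * c = a] (mod q)))"

definition Legendre_rat :: "rat \<Rightarrow> int \<Rightarrow> int" where
  "Legendre_rat x q = Legendre (rat_mod x q) q"

end

theory Submission
  imports Defs
begin

(* Expanding binomially, S is the sum over odd k <= h of (h choose k) r^(h-k) s^k p^((k-1)/2).
   Modulo q the norm equation gives p s^2 = r^2, so every term is congruent to
   (h choose k) r^(h-1) s; the odd binomial coefficients add up to 2^(h-1), hence
   S = (2r)^(h-1) s (mod q). As h is odd, (2r)^(h-1) is a square prime to q, so S and s
   have the same quadratic character. *)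

lemma rat_mod_spec:
  assumes "quotient_of x = (n, d)" "coprime d q" "q > 1"
  shows "[d * rat_mod x q = n] (mod q)"
proof -
  obtain v where v: "[d * v = 1] (mod q)"
    using cong_solve_coprime_int[OF assms(2)] by blast
  have "\<exists>!c. 0 \<le> c \<and> c < q \<and> [d * c = n] (mod q)"
  proof (rule ex_ex1I)
    have "[d * ((v * n) mod q) = (d * v) * n] (mod q)"
      by (simp add: cong_def mod_mult_right_eq ac_simps)
    also have "[(d * v) * n = 1 * n] (mod q)"
      using v by (rule cong_mult) simp
    finally show "\<exists>c. 0 \<le> c \<and> c < q \<and> [d * c = n] (mod q)"
      using assms(3) by (intro exI[of _ "(v * n) mod q"]) simp
  next
    fix c c'
    assume c: "0 \<le> c \<and> c < q \<and> [d * c = n] (mod q)"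
      and c': "0 \<le> c' \<and> c' < q \<and> [d * c' = n] (mod q)"
    then have "[d * c = d * c'] (mod q)"
      by (simp add: cong_def)
    then have "[c = c'] (mod q)"
      using cong_mult_lcancel[OF assms(2)] by blast
    with c c' show "c = c'" by (simp add: cong_def)
  qed
  from theI'[OF this] show ?thesis
    unfolding rat_mod_def assms(1) by simp
qed

lemma rat_mod_cong:
  fixes q m N :: int and x :: rat
  assumes "q > 1" "coprime m q" "x * of_int m = of_int N"
  shows "[m * rat_mod x q = N] (mod q)"
proof -
  obtain n d where nd: "quotient_of x = (n, d)" by fastforce
  have "x = of_int n / of_int d" "d > 0" "coprime n d"
    using quotient_of_div quotient_of_denom_pos quotient_of_coprime nd by blast+
  with assms(3) have "n * m = N * d"
    by (simp add: field_simps flip: of_int_mult of_int_eq_iff)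
  with \<open>coprime n d\<close> have "d dvd m"
    by (metis coprime_commute coprime_dvd_mult_right_iff dvd_triv_right)
  with assms(2) have "coprime d q"
    using coprime_imp_coprime dvd_trans by blast
  have "[d * (m * rat_mod x q) = m * n] (mod q)"
    using rat_mod_spec[OF nd \<open>coprime d q\<close> assms(1)] by (metis cong_scalar_left mult.left_commute)
  also have "m * n = d * N" using \<open>n * m = N * d\<close> by (simp add: ac_simps)
  finally show ?thesis
    using cong_mult_lcancel[OF \<open>coprime d q\<close>] by blast
qed

lemma Legendre_cong:
  "[x = y] (mod q) \<Longrightarrow> Legendre x q = Legendre y q"
  unfolding Legendre_def QuadRes_def cong_def by simp

lemma Legendre_square_mult:
  fixes q w x :: int
  assumes "coprime w q"
  shows "Legendre (w^2 * x) q = Legendre x q"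
proof -
  obtain v where v: "[w * v = 1] (mod q)"
    using cong_solve_coprime_int[OF assms] by blast
  have "[w^2 * x = 0] (mod q) \<longleftrightarrow> [x = 0] (mod q)"
    using cong_mult_lcancel[of "w^2" q x 0] assms by simp
  moreover have "QuadRes q (w^2 * x) \<longleftrightarrow> QuadRes q x"
  proof
    assume "QuadRes q (w^2 * x)"
    then obtain y where "[y^2 = w^2 * x] (mod q)" unfolding QuadRes_def by blast
    then have "[v^2 * y^2 = v^2 * (w^2 * x)] (mod q)"
      by (rule cong_scalar_left)
    then have "[(v * y)^2 = (w * v)^2 * x] (mod q)"
      by (simp add: power_mult_distrib ac_simps)
    also have "[(w * v)^2 * x = 1^2 * x] (mod q)"
      using v by (intro cong_mult cong_pow) auto
    finally show "QuadRes q x" unfolding QuadRes_def by auto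
  next
    assume "QuadRes q x"
    then obtain y where "[y^2 = x] (mod q)" unfolding QuadRes_def by blast
    then have "[(w * y)^2 = w^2 * x] (mod q)"
      using cong_scalar_left[of _ _ q "w^2"] by (simp add: power_mult_distrib)
    then show "QuadRes q (w^2 * x)" unfolding QuadRes_def by blast
  qed
  ultimately show ?thesis unfolding Legendre_def by simp
qed

lemma binomial_diff:
  fixes x y :: "'a::comm_ring_1"
  shows "(x + y)^h - (x - y)^h = 2 * (\<Sum>k\<le>h. if odd k then of_nat (h choose k) * x^(h-k) * y^k else 0)"
proof -
  have "(x + y)^h - (x - y)^h
      = (\<Sum>k\<le>h. of_nat (h choose k) * y^k * x^(h-k) - of_nat (h choose k) * (-y)^k * x^(h-k))"
    using binomial_ring[of y x h] binomial_ring[of "-y" x h]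
    by (simp add: sum_subtractf atLeast0AtMost add.commute)
  also have "\<dots> = 2 * (\<Sum>k\<le>h. if odd k then of_nat (h choose k) * x^(h-k) * y^k else 0)"
    unfolding sum_distrib_left by (intro sum.cong) (auto simp: power_minus_odd)
  finally show ?thesis .
qed

definition sqrt_coeff_pow :: "nat \<Rightarrow> 'a::comm_ring_1 \<Rightarrow> 'a \<Rightarrow> 'a \<Rightarrow> 'a" where
  "sqrt_coeff_pow h x y d =
     (\<Sum>k\<le>h. if odd k then of_nat (h choose k) * x^(h-k) * y^k * d^((k-1) div 2) else 0)"

lemma sqrt_coeff_pow_sqrt:
  fixes x y d :: real
  assumes "d \<ge> 0"
  shows "(x + y * sqrt d)^h - (x - y * sqrt d)^h = 2 * sqrt_coeff_pow h x y d * sqrt d"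
proof -
  have sqrt_pow: "sqrt d ^ k = d ^ ((k-1) div 2) * sqrt d" if "odd k" for k
  proof -
    from \<open>odd k\<close> obtain j where "k = 2 * j + 1" by (rule oddE)
    then show ?thesis using assms by (simp add: power_mult power_add)
  qed
  have "(x + y * sqrt d)^h - (x - y * sqrt d)^h
      = 2 * (\<Sum>k\<le>h. if odd k then of_nat (h choose k) * x^(h-k) * (y * sqrt d)^k else 0)"
    by (rule binomial_diff)
  also have "(\<Sum>k\<le>h. if odd k then of_nat (h choose k) * x^(h-k) * (y * sqrt d)^k else 0)
      = sqrt_coeff_pow h x y d * sqrt d"
    unfolding sqrt_coeff_pow_def sum_distrib_right
    by (intro sum.cong) (auto simp: sqrt_pow power_mult_distrib)
  finally show ?thesis by (simp only: mult.assoc)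
qed

lemma of_rat_sqrt_coeff_pow:
  "of_rat (sqrt_coeff_pow h x y d) = sqrt_coeff_pow h (of_rat x) (of_rat y) (of_rat d)"
  unfolding sqrt_coeff_pow_def of_rat_sum by (intro sum.cong) (auto simp: of_rat_mult of_rat_power)

lemma of_int_sqrt_coeff_pow:
  "of_int (sqrt_coeff_pow h x y d) = sqrt_coeff_pow h (of_int x) (of_int y) (of_int d)"
  unfolding sqrt_coeff_pow_def of_int_sum by (intro sum.cong) auto

lemma sqrt_coeff_pow_scale:
  "sqrt_coeff_pow h (c * x) (c * y) d = c^h * sqrt_coeff_pow h x y d"
  unfolding sqrt_coeff_pow_def sum_distrib_left
proof (intro sum.cong refl)
  fix k assume "k \<in> {..h}"
  then have "c^h = c^(h-k) * c^k"
    by (simp flip: power_add)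
  then have "(c * x)^(h-k) * (c * y)^k = c^h * (x^(h-k) * y^k)"
    by (simp add: power_mult_distrib ac_simps)
  then show "(if odd k then of_nat (h choose k) * (c * x)^(h-k) * (c * y)^k * d^((k-1) div 2) else 0)
      = c^h * (if odd k then of_nat (h choose k) * x^(h-k) * y^k * d^((k-1) div 2) else 0)"
    by (simp add: ac_simps)
qed

lemma sqrt_coeff_pow_cong:
  fixes a b d q :: int
  assumes "[a^2 = d * b^2] (mod q)" "h \<ge> 1"
  shows "[sqrt_coeff_pow h a b d = 2^(h-1) * a^(h-1) * b] (mod q)"
proof -
  have term_cong: "[a^(h-k) * b^k * d^((k-1) div 2) = a^(h-1) * b] (mod q)"
    if "odd k" "k \<le> h" for k
  proof -
    define j where "j = (k-1) div 2"
    have k: "k = 2 * j + 1" using \<open>odd k\<close> unfolding j_def by presburger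
    have "a^(h-k) * b^k * d^((k-1) div 2) = b * (a^(h-k) * (d * b^2)^j)"
      unfolding k j_def[symmetric] by (simp add: power_mult_distrib power_add ac_simps flip: power_mult)
    also have "[\<dots> = b * (a^(h-k) * (a^2)^j)] (mod q)"
      using assms(1) by (intro cong_mult cong_refl cong_pow) (rule cong_sym)
    also have "b * (a^(h-k) * (a^2)^j) = a^(h-1) * b"
      using \<open>k \<le> h\<close> unfolding k by (simp add: ac_simps flip: power_mult power_add)
    finally show ?thesis .
  qed
  have "[sqrt_coeff_pow h a b d = (\<Sum>k\<le>h. if odd k then int (h choose k) * (a^(h-1) * b) else 0)] (mod q)"
    unfolding sqrt_coeff_pow_def using term_cong
    by (intro cong_sum) (auto intro: cong_scalar_left simp: mult.assoc)
  also have "(\<Sum>k\<le>h. if odd k then int (h choose k) * (a^(h-1) * b) else 0)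
      = (\<Sum>k\<le>h. if odd k then int (h choose k) else 0) * (a^(h-1) * b)"
    unfolding sum_distrib_right by (intro sum.cong) auto
  also have "(\<Sum>k\<le>h. if odd k then int (h choose k) else 0) = 2^(h-1)"
    using choose_odd_sum[of h, where 'a = int] assms(2) by (simp add: power_eq_if)
  finally show ?thesis by (simp add: mult.assoc)
qed

lemma sqrt_coeff_pow_rat_unique:
  fixes x y S :: rat and d :: int
  assumes "d > 0"
    and "(of_rat x + of_rat y * sqrt (of_int d))^h - (of_rat x - of_rat y * sqrt (of_int d))^h
           = 2 * of_rat S * sqrt (of_int d)"
  shows "S = sqrt_coeff_pow h x y (of_int d)"
proof -
  have "of_rat S * sqrt (of_int d) = of_rat (sqrt_coeff_pow h x y (of_int d)) * sqrt (of_int d)"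
    using assms sqrt_coeff_pow_sqrt[of "of_int d" "of_rat x" "of_rat y" h]
    by (simp add: of_rat_sqrt_coeff_pow)
  then show ?thesis
    using assms(1) by simp
qed

lemma norm_of_halves:
  fixes r s :: rat and a b d N :: int
  assumes "2 * r = of_int a" "2 * s = of_int b" "r^2 - of_int d * s^2 = of_int N"
  shows "a^2 - d * b^2 = 4 * N"
proof -
  have "rat_of_int (a^2 - d * b^2) = (2 * r)^2 - of_int d * (2 * s)^2"
    using assms(1,2) by simp
  also have "\<dots> = 4 * (r^2 - of_int d * s^2)"
    by (simp add: power_mult_distrib right_diff_distrib)
  also have "\<dots> = of_int (4 * N)"
    using assms(3) by simp
  finally show ?thesis
    by (simp only: of_int_eq_iff)
qed

theorem lemma5:
  fixes p q :: int and h :: nat and r s S :: rat and a b :: int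
  assumes "prime p" and "odd p" and "prime q" and "odd q"
    and "odd h" and "h \<ge> 1"
    and "2 * r = of_int a" and "2 * s = of_int b"
    and "\<not> [a = 0] (mod q)" and "\<not> [b = 0] (mod q)"
    and "r ^ 2 - of_int p * s ^ 2 = of_int q ^ h"
    and "(of_rat r + of_rat s * sqrt (of_int p)) ^ h - (of_rat r - of_rat s * sqrt (of_int p)) ^ h
           = 2 * of_rat S * sqrt (of_int p)"
  shows "Legendre_rat S q = Legendre_rat s q"
proof -
  obtain k where h: "h = Suc (2 * k)"
    using \<open>odd h\<close> by (metis oddE Suc_eq_plus1)
  have "p > 0" "q > 1"
    using assms(1,3) by (simp_all add: prime_gt_0_int prime_gt_1_int)
  have "coprime 2 q"
    using \<open>odd q\<close> by (simp add: coprime_commute)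
  have "coprime a q"
    using assms(3,9) by (metis cong_0_iff coprime_commute prime_imp_coprime)
  have "a^2 - p * b^2 = 4 * q^h"
    using assms(11) by (intro norm_of_halves[OF assms(7,8)]) simp
  then have norm: "[a^2 = p * b^2] (mod q)"
    unfolding h by (simp add: cong_iff_dvd_diff)
  have "S * of_int (2^h) = of_int (sqrt_coeff_pow h a b p)"
    using sqrt_coeff_pow_rat_unique[OF \<open>p > 0\<close> assms(12)] sqrt_coeff_pow_scale[of h 2 r s] assms(7,8)
    by (simp add: of_int_sqrt_coeff_pow mult.commute)
  then have "[2^h * rat_mod S q = sqrt_coeff_pow h a b p] (mod q)"
    using rat_mod_cong[OF \<open>q > 1\<close>] \<open>coprime 2 q\<close> by simp
  also have "[sqrt_coeff_pow h a b p = 2^(h-1) * a^(h-1) * b] (mod q)"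
    using norm \<open>h \<ge> 1\<close> by (rule sqrt_coeff_pow_cong)
  also have "[2^(h-1) * a^(h-1) * b = 2^(h-1) * a^(h-1) * (2 * rat_mod s q)] (mod q)"
    using rat_mod_cong[OF \<open>q > 1\<close> \<open>coprime 2 q\<close>, of s b] assms(8)
    by (intro cong_scalar_left) (simp add: cong_sym mult.commute)
  also have "2^(h-1) * a^(h-1) * (2 * rat_mod s q) = 2^h * ((a^k)^2 * rat_mod s q)"
    unfolding h by (simp add: power_mult_distrib ac_simps flip: power_mult)
  finally have "[rat_mod S q = (a^k)^2 * rat_mod s q] (mod q)"
    using \<open>coprime 2 q\<close> by (simp add: cong_mult_lcancel)
  then show ?thesis
    unfolding Legendre_rat_def using \<open>coprime a q\<close> by (simp add: Legendre_cong Legendre_square_mult)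
qed

end
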